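(* Let $S$ be a numerical semigroup, let $b\in\mathrm{IBetti}(S)$ and let $s\in S$. Write $s=\omega_s+q_sb$ with $\omega_s\in\mathrm{Ap}(S;b)$ and $q_s\in\mathbb N$. Then $$|\mathrm B(s;\{b\})|=\begin{cases}\binom{\mathrm i(b)+q_s-1}{q_s}&\text{if }\mathfrak d(\omega_s)=1,\\ 0&\text{otherwise.}\end{cases}$$
   Context: A numerical semigroup $S$ is a submonoid of $(\mathbb N,+)$ with finite complement, minimally generated by $\{n_1,\dots,n_e\}$. For $m\in S$, the Apéry set is $\mathrm{Ap}(S;m)=\{s\in S: s-m\notin S\}$; every $s\in S$ is uniquely $s=\omega+qm$ with $\omega\in\mathrm{Ap}(S;m)$, $q\in\mathbb N$. Let $\varphi:\mathbb N^e\to S$, $\varphi(a)=\sum_ia_in_i$; $\mathrm Z(s)=\varphi^{-1}(s)$, $\mathfrak d(s)=|\mathrm Z(s)|$. $\nabla_s$ is the graph on $\mathrm Z(s)$ with distinct $x,y$ adjacent iff $x\cdot y\ne0$; $s$ is a Betti element if $\nabla_s$ is disconnected. A factorization $z\in\mathrm Z(s)$ is isolated if $z\cdot x=0$ for all $x\in\mathrm Z(s)\setminus\{z\}$; $\mathrm I(s)$ is the set of isolated factorizations of $s$, $\mathrm i(s)=|\mathrm I(s)|$, and $\mathrm I(\Lambda)=\bigcup_{t\in\Lambda}\mathrm I(t)$ for $\Lambda\subseteq S$. $\mathrm I_s(S)$ is the set of $z\in\mathbb N^e$ such that $\varphi(z)$ has exactly one factorization. $\mathrm{IBetti}(S)$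 is the set of Betti elements $b$ with $\mathrm I(b)\neq\emptyset$. For $\Lambda\subseteq S$, $\mathrm B(s;\Lambda)=\{w+x_1+\cdots+x_l\in\mathrm Z(s): w\in\mathrm I_s(S),\ l\ge0,\ x_1,\dots,x_l\in\mathrm I(\Lambda)\}$. *)

theory Defs
  imports Main
begin

definition numerical_semigroup :: "nat set \<Rightarrow> bool" where
  "numerical_semigroup S \<longleftrightarrow> 0 \<in> S \<and> (\<forall>a\<in>S. \<forall>b\<in>S. a + b \<in> S) \<and> finite (UNIV - S)"

definition mgens :: "nat set \<Rightarrow> nat set" where
  "mgens S = {n \<in> S. n \<noteq> 0 \<and> \<not> (\<exists>a\<in>S. \<exists>c\<in>S. a \<noteq> 0 \<and> c \<noteq> 0 \<and> n = a + c)}"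

definition vecs :: "nat set \<Rightarrow> (nat \<Rightarrow> nat) set" where
  "vecs S = {z. \<forall>i. i \<notin> mgens S \<longrightarrow> z i = 0}"

definition phi :: "nat set \<Rightarrow> (nat \<Rightarrow> nat) \<Rightarrow> nat" where
  "phi S z = (\<Sum>i\<in>mgens S. z i * i)"

definition dotp :: "nat set \<Rightarrow> (nat \<Rightarrow> nat) \<Rightarrow> (nat \<Rightarrow> nat) \<Rightarrow> nat" where
  "dotp S x y = (\<Sum>i\<in>mgens S. x i * y i)"

definition Zf :: "nat set \<Rightarrow> nat \<Rightarrow> (nat \<Rightarrow> nat) set" where
  "Zf S s = {z \<in> vecs S. phi S z = s}"

definition dfac :: "nat set \<Rightarrow> nat \<Rightarrow> nat" where
  "dfac S s = card (Zf S s)"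

definition Apery :: "nat set \<Rightarrow> nat \<Rightarrow> nat set" where
  "Apery S m = {w \<in> S. \<forall>t\<in>S. w \<noteq> t + m}"

definition nabla_edges :: "nat set \<Rightarrow> nat \<Rightarrow> ((nat \<Rightarrow> nat) \<times> (nat \<Rightarrow> nat)) set" where
  "nabla_edges S s = {(x, y). x \<in> Zf S s \<and> y \<in> Zf S s \<and> x \<noteq> y \<and> dotp S x y \<noteq> 0}"

definition is_Betti :: "nat set \<Rightarrow> nat \<Rightarrow> bool" where
  "is_Betti S s \<longleftrightarrow> s \<in> S \<and>
     (\<exists>x\<in>Zf S s. \<exists>y\<in>Zf S s. (x, y) \<notin> (nabla_edges S s)\<^sup>*)"

definition Iso :: "nat set \<Rightarrow> nat \<Rightarrow> (nat \<Rightarrow> nat) set" where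
  "Iso S s = {z \<in> Zf S s. \<forall>x \<in> Zf S s - {z}. dotp S z x = 0}"

definition iso_num :: "nat set \<Rightarrow> nat \<Rightarrow> nat" where
  "iso_num S s = card (Iso S s)"

definition IsoSet :: "nat set \<Rightarrow> nat set \<Rightarrow> (nat \<Rightarrow> nat) set" where
  "IsoSet S L = (\<Union>t\<in>L. Iso S t)"

definition Iuniq :: "nat set \<Rightarrow> (nat \<Rightarrow> nat) set" where
  "Iuniq S = {z \<in> vecs S. card (Zf S (phi S z)) = 1}"

definition IBetti :: "nat set \<Rightarrow> nat set" where
  "IBetti S = {b. is_Betti S b \<and> Iso S b \<noteq> {}}"

definition Bset :: "nat set \<Rightarrow> nat \<Rightarrow> nat set \<Rightarrow> (nat \<Rightarrow> nat) set" where
  "Bset S s L = {z \<in> Zf S s. \<exists>w \<in> Iuniq S. \<exists>xs :: (nat \<Rightarrow> nat) list.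
      set xs \<subseteq> IsoSet S L \<and> z = (\<lambda>i. w i + sum_list (map (\<lambda>x. x i) xs))}"

end

theory Submission
  imports Defs "HOL-Library.Multiset" "HOL-Library.FuncSet" "HOL-Library.Function_Algebras"
begin

(* An element of B(s;{b}) is u + x_1 + ... + x_l with u having a unique factorization and the
   x_i isolated factorizations of b, so phi u + l b = w + q b.  If l > q then w - b would lie
   in S, contradicting w \<in> Ap(S;b); if l < q then phi u = t + b with t \<in> S, and the two
   distinct factorizations of b give phi u two factorizations.  Hence l = q and u is the unique
   factorization of w, which exists only when d(w) = 1.  Distinct isolated factorizations of b
   have disjoint supports, so the multiset {x_1, ..., x_q} can be read off from the sum, and
   B(s;{b}) is in bijection with the multisets of size q on I(b). *)

lemma numerical_semigroup_add_mem:
  "numerical_semigroup S \<Longrightarrow> a \<in> S \<Longrightarrow> c \<in> S \<Longrightarrow> a + c \<in> S"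
  by (simp add: numerical_semigroup_def)

lemma numerical_semigroup_mult_mem:
  "numerical_semigroup S \<Longrightarrow> a \<in> S \<Longrightarrow> k * a \<in> S"
  by (induction k) (auto simp: numerical_semigroup_def)

lemma finite_mgens:
  assumes ns: "numerical_semigroup S"
  shows "finite (mgens S)"
proof -
  have gaps: "finite (UNIV - S)"
    using ns by (simp add: numerical_semigroup_def)
  then have "infinite S"
    by (metis finite_Un Un_Diff_cancel2 sup_top_left infinite_UNIV_nat)
  then obtain x where x: "x \<in> S" "x \<noteq> 0"
    using infinite_super[of S "{0}"] by blast
  define m where "m = (LEAST x. x \<in> S \<and> x \<noteq> 0)"
  have m: "m \<in> S" "m \<noteq> 0"
    using LeastI[of "\<lambda>x. x \<in> S \<and> x \<noteq> 0" x] x by (auto simp: m_def)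
  have "mgens S \<subseteq> {..m} \<union> (\<lambda>g. g + m) ` (UNIV - S)"
  proof
    fix n assume n: "n \<in> mgens S"
    show "n \<in> {..m} \<union> (\<lambda>g. g + m) ` (UNIV - S)"
    proof (cases "n \<le> m")
      case False
      have "n - m \<notin> S"
      proof
        assume "n - m \<in> S"
        moreover have "n = m + (n - m)" "n - m \<noteq> 0"
          using False by auto
        ultimately show False
          using n m unfolding mgens_def by blast
      qed
      then have "n = (n - m) + m" "n - m \<in> UNIV - S"
        using False by auto
      then show ?thesis by blast
    qed simp
  qed
  then show ?thesis
    using gaps by (meson finite_Un finite_atMost finite_imageI finite_subset)
qed

lemma phi_zero [simp]: "phi S 0 = 0"
  by (simp add: phi_def)

lemma phi_add: "phi S (x + y) = phi S x + phi S y"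
  by (simp add: phi_def sum.distrib algebra_simps)

lemma vecs_add: "x \<in> vecs S \<Longrightarrow> y \<in> vecs S \<Longrightarrow> x + y \<in> vecs S"
  by (simp add: vecs_def)

lemma vecs_sum_mset: "set_mset M \<subseteq> vecs S \<Longrightarrow> sum_mset M \<in> vecs S"
  by (induction M) (auto simp: vecs_def)

lemma sum_mset_apply: "sum_mset M i = (\<Sum>x\<in>#M. x i)"
  by (induction M) simp_all

lemma sum_list_apply: "sum_list xs i = (\<Sum>x\<leftarrow>xs. x i)"
  by (induction xs) simp_all

lemma numerical_semigroup_sum_mem:
  assumes "numerical_semigroup S" "\<And>i. i \<in> A \<Longrightarrow> f i \<in> S"
  shows "sum f A \<in> S"
  using assms(2)
  by (induction A rule: infinite_finite_induct)
    (use assms(1) in \<open>auto simp: numerical_semigroup_def\<close>)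

lemma phi_mem: "numerical_semigroup S \<Longrightarrow> phi S z \<in> S"
  unfolding phi_def
  by (rule numerical_semigroup_sum_mem) (auto simp: mgens_def numerical_semigroup_mult_mem)

lemma Zf_nonempty:
  assumes ns: "numerical_semigroup S" and s: "s \<in> S"
  shows "Zf S s \<noteq> {}"
  using s
proof (induction s rule: less_induct)
  case (less s)
  show ?case
  proof (cases "s = 0 \<or> s \<in> mgens S")
    case True
    let ?z = "\<lambda>i. if i = s \<and> s \<noteq> 0 then 1 else 0 :: nat"
    have "phi S ?z = (\<Sum>i\<in>mgens S. if i = s \<and> s \<noteq> 0 then i else 0)"
      unfolding phi_def by (rule sum.cong) auto
    also have "\<dots> = s"
      using True finite_mgens[OF ns] by (auto simp: mgens_def)
    finally have "phi S ?z = s" .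
    moreover have "?z \<in> vecs S"
      using True by (auto simp: vecs_def)
    ultimately show ?thesis
      unfolding Zf_def by blast
  next
    case False
    then obtain a c where ac: "a \<in> S" "c \<in> S" "a \<noteq> 0" "c \<noteq> 0" "s = a + c"
      using less.prems by (auto simp: mgens_def)
    obtain x y where "x \<in> Zf S a" "y \<in> Zf S c"
      using less.IH[of a] less.IH[of c] ac by fastforce
    then have "x + y \<in> Zf S s"
      using ac by (simp add: Zf_def vecs_add phi_add)
    then show ?thesis by blast
  qed
qed

lemma finite_Zf:
  assumes ns: "numerical_semigroup S"
  shows "finite (Zf S s)"
proof -
  let ?extend = "\<lambda>f i. if i \<in> mgens S then f i else 0 :: nat"
  have "Zf S s \<subseteq> ?extend ` PiE (mgens S) (\<lambda>_. {..s})"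
  proof
    fix z assume z: "z \<in> Zf S s"
    have "z i \<le> s" if i: "i \<in> mgens S" for i
    proof -
      have "z i \<le> z i * i"
        using i by (simp add: mgens_def)
      also have "\<dots> \<le> phi S z"
        unfolding phi_def using finite_mgens[OF ns] i by (intro member_le_sum) auto
      finally show ?thesis
        using z by (simp add: Zf_def)
    qed
    then have "restrict z (mgens S) \<in> PiE (mgens S) (\<lambda>_. {..s})"
      by simp
    moreover have "z = ?extend (restrict z (mgens S))"
      using z by (auto simp: Zf_def vecs_def)
    ultimately show "z \<in> ?extend ` PiE (mgens S) (\<lambda>_. {..s})"
      by blast
  qed
  then show ?thesis
    using finite_PiE[OF finite_mgens[OF ns]] by (meson finite_atMost finite_imageI finite_subset)
qed

lemma phi_eq_0_iff:
  assumes "numerical_semigroup S" "z \<in> vecs S"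
  shows "phi S z = 0 \<longleftrightarrow> z = 0"
proof
  assume "phi S z = 0"
  then have "\<forall>i\<in>mgens S. z i = 0"
    using finite_mgens[OF assms(1)] by (auto simp: phi_def mgens_def)
  then show "z = 0"
    using assms(2) by (auto simp: vecs_def fun_eq_iff)
qed simp

lemma Zf_zero: "numerical_semigroup S \<Longrightarrow> Zf S 0 = {0}"
  by (auto simp: Zf_def phi_eq_0_iff vecs_def)

lemma dfac_zero: "numerical_semigroup S \<Longrightarrow> dfac S 0 = 1"
  by (simp add: dfac_def Zf_zero)

lemma mem_if_dfac_pos:
  assumes "numerical_semigroup S" "0 < dfac S s"
  shows "s \<in> S"
proof -
  obtain z where "z \<in> Zf S s"
    using assms(2) unfolding dfac_def by (metis card.empty ex_in_conv less_irrefl)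
  then show ?thesis
    using phi_mem[OF assms(1)] by (auto simp: Zf_def)
qed

lemma dfac_add_ge_2:
  assumes ns: "numerical_semigroup S" and a: "a \<in> S" and b: "2 \<le> dfac S b"
  shows "2 \<le> dfac S (a + b)"
proof -
  obtain y where y: "y \<in> Zf S a"
    using Zf_nonempty[OF ns a] by blast
  have "(+) y ` Zf S b \<subseteq> Zf S (a + b)"
    using y by (auto simp: Zf_def vecs_add phi_add)
  then have "card ((+) y ` Zf S b) \<le> dfac S (a + b)"
    unfolding dfac_def using finite_Zf[OF ns] by (rule card_mono[rotated])
  moreover have "card ((+) y ` Zf S b) = dfac S b"
    unfolding dfac_def by (rule card_image) (simp add: inj_on_def)
  ultimately show ?thesis
    using b by simp
qed

lemma dfac_ge_2_if_Betti:
  assumes ns: "numerical_semigroup S" and "is_Betti S b"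
  shows "2 \<le> dfac S b"
proof -
  obtain x y where "x \<in> Zf S b" "y \<in> Zf S b" "x \<noteq> y"
    using assms(2) unfolding is_Betti_def by blast
  then have "{x, y} \<subseteq> Zf S b" "card {x, y} = 2"
    by auto
  then show ?thesis
    unfolding dfac_def using finite_Zf[OF ns] by (metis card_mono)
qed

lemma Apery_multiple_le:
  assumes ns: "numerical_semigroup S" and w: "w \<in> Apery S b" and b: "b \<in> S"
    and t: "t \<in> S" and eq: "t + l * b = w + q * b"
  shows "l \<le> q"
proof (rule ccontr)
  assume "\<not> l \<le> q"
  then obtain k where "l = Suc (q + k)"
    by (metis less_iff_Suc_add not_le)
  then have "w = (t + k * b) + b"
    using eq by (simp add: algebra_simps)
  moreover have "t + k * b \<in> S"
    using ns t b numerical_semigroup_add_mem numerical_semigroup_mult_mem by blast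
  ultimately show False
    using w by (auto simp: Apery_def)
qed

lemma unique_factorization_multiple_ge:
  assumes ns: "numerical_semigroup S" and b: "2 \<le> dfac S b" and w: "w \<in> S"
    and t: "dfac S t = 1" and eq: "t + l * b = w + q * b"
  shows "q \<le> l"
proof (rule ccontr)
  assume "\<not> q \<le> l"
  then obtain k where "q = Suc (l + k)"
    by (metis less_iff_Suc_add not_le)
  then have "t = (w + k * b) + b"
    using eq by (simp add: algebra_simps)
  moreover have "b \<in> S"
    using mem_if_dfac_pos[OF ns] b by simp
  then have "w + k * b \<in> S"
    using ns w numerical_semigroup_add_mem numerical_semigroup_mult_mem by blast
  ultimately have "2 \<le> dfac S t"
    using dfac_add_ge_2[OF ns _ b] by simp
  then show False
    using t by simp
qed

lemma Iso_subset_Zf: "Iso S b \<subseteq> Zf S b"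
  by (auto simp: Iso_def)

lemma phi_sum_mset_Zf:
  assumes "set_mset M \<subseteq> Zf S b"
  shows "phi S (sum_mset M) = size M * b"
  using assms by (induction M) (auto simp: phi_add Zf_def)

lemma Iso_coordinate_eq_0:
  assumes ns: "numerical_semigroup S" and x: "x \<in> Iso S b" and y: "y \<in> Iso S b" "y \<noteq> x"
    and i: "i \<in> mgens S" "x i \<noteq> 0"
  shows "y i = 0"
proof -
  have "dotp S x y = 0"
    using x y Iso_subset_Zf by (auto simp: Iso_def)
  then have "x i * y i = 0"
    using finite_mgens[OF ns] i(1) by (simp add: dotp_def)
  then show ?thesis
    using i(2) by simp
qed

lemma sum_mset_Iso_apply:
  assumes ns: "numerical_semigroup S" and M: "set_mset M \<subseteq> Iso S b" and x: "x \<in> Iso S b"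
    and i: "i \<in> mgens S" "x i \<noteq> 0"
  shows "sum_mset M i = x i * count M x"
proof -
  have "image_mset (\<lambda>y. y i) M = image_mset (\<lambda>y. if y = x then x i else 0) M"
    using M Iso_coordinate_eq_0[OF ns x _ _ i] by (intro image_mset_cong) auto
  then show ?thesis
    by (simp add: sum_mset_apply sum_mset_delta)
qed

lemma inj_on_add_sum_mset_Iso:
  assumes ns: "numerical_semigroup S" and "b \<noteq> 0"
  shows "inj_on (\<lambda>M. u + sum_mset M) {M. set_mset M \<subseteq> Iso S b}"
proof
  fix M N assume M: "M \<in> {M. set_mset M \<subseteq> Iso S b}" and N: "N \<in> {M. set_mset M \<subseteq> Iso S b}"
    and eq: "u + sum_mset M = u + sum_mset N"
  show "M = N"
  proof (rule multiset_eqI)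
    fix x
    show "count M x = count N x"
    proof (cases "x \<in> Iso S b")
      case True
      then have "x \<in> Zf S b"
        using Iso_subset_Zf by blast
      then have "x \<in> vecs S" "x \<noteq> 0"
        using assms(2) by (auto simp: Zf_def)
      then obtain i where "x i \<noteq> 0"
        by (auto simp: fun_eq_iff)
      then have i: "i \<in> mgens S" "x i \<noteq> 0"
        using \<open>x \<in> vecs S\<close> by (auto simp: vecs_def)
      have "x i * count M x = x i * count N x"
        using fun_cong[OF eq, of i] M N sum_mset_Iso_apply[OF ns _ True i] by simp
      then show ?thesis
        using i(2) by simp
    next
      case False
      then have "count M x = 0" "count N x = 0"
        using M N by (auto simp: count_eq_zero_iff)
      then show ?thesis
        by simp
    qed
  qed
qed

lemma card_add_sum_mset_Iso:
  assumes ns: "numerical_semigroup S" and "b \<noteq> 0"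
  shows "card ((\<lambda>M. u + sum_mset M) ` multisets_of_size (Iso S b) q) =
    (iso_num S b + q - 1) choose q"
proof -
  have "inj_on (\<lambda>M. u + sum_mset M) (multisets_of_size (Iso S b) q)"
    using inj_on_add_sum_mset_Iso[OF assms]
    by (rule inj_on_subset) (auto simp: multisets_of_size_def)
  moreover have "finite (Iso S b)"
    using finite_Zf[OF ns] Iso_subset_Zf by (rule finite_subset[rotated])
  ultimately show ?thesis
    by (simp add: card_image card_multisets_of_size iso_num_def)
qed

lemma Bset_eq_sum_mset:
  "Bset S s L = {z \<in> Zf S s. \<exists>u\<in>Iuniq S. \<exists>M. set_mset M \<subseteq> IsoSet S L \<and> z = u + sum_mset M}"
proof -
  have sum_eq: "(\<lambda>i. u i + (\<Sum>x\<leftarrow>xs. x i)) = u + sum_mset (mset xs)"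
    for u :: "nat \<Rightarrow> nat" and xs
    by (simp add: fun_eq_iff sum_list_apply sum_mset_sum_list)
  have ex_mset_iff: "(\<exists>xs. set xs \<subseteq> A \<and> z = u + sum_mset (mset xs)) \<longleftrightarrow>
      (\<exists>M. set_mset M \<subseteq> A \<and> z = u + sum_mset M)" for A z u
    by (metis ex_mset set_mset_mset)
  show ?thesis
    unfolding Bset_def sum_eq ex_mset_iff ..
qed

lemma Bset_singleton_eq:
  assumes ns: "numerical_semigroup S" and b: "2 \<le> dfac S b"
    and w: "w \<in> Apery S b" and s: "s = w + q * b"
  shows "Bset S s {b} =
    {u + sum_mset M | u M. u \<in> Zf S w \<and> dfac S w = 1 \<and> M \<in> multisets_of_size (Iso S b) q}"
proof -
  have bS: "b \<in> S"
    using mem_if_dfac_pos[OF ns] b by simp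
  have wS: "w \<in> S"
    using w by (simp add: Apery_def)
  have phi_z: "phi S (u + sum_mset M) = phi S u + size M * b"
    if "set_mset M \<subseteq> Iso S b" for u M
    using that Iso_subset_Zf phi_sum_mset_Zf by (metis phi_add subset_trans)
  have vecs_z: "u + sum_mset M \<in> vecs S" if "u \<in> vecs S" "set_mset M \<subseteq> Iso S b" for u M
    using that Iso_subset_Zf by (auto simp: Zf_def intro!: vecs_add vecs_sum_mset)
  show ?thesis
    unfolding Bset_eq_sum_mset
  proof safe
    fix u M assume u: "u \<in> Iuniq S" and M: "set_mset M \<subseteq> IsoSet S {b}"
      and z: "u + sum_mset M \<in> Zf S s"
    have M': "set_mset M \<subseteq> Iso S b"
      using M by (simp add: IsoSet_def)
    have eq: "phi S u + size M * b = w + q * b"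
      using z phi_z[OF M'] s by (simp add: Zf_def)
    have "dfac S (phi S u) = 1"
      using u by (simp add: Iuniq_def dfac_def)
    then have "size M = q"
      using Apery_multiple_le[OF ns w bS phi_mem[OF ns] eq]
        unique_factorization_multiple_ge[OF ns b wS _ eq] by simp
    then have "phi S u = w"
      using eq by simp
    then show "\<exists>u' M'. u + sum_mset M = u' + sum_mset M' \<and> u' \<in> Zf S w \<and> dfac S w = 1
        \<and> M' \<in> multisets_of_size (Iso S b) q"
      using u M' \<open>size M = q\<close> by (auto simp: Iuniq_def Zf_def dfac_def multisets_of_size_def)
  next
    fix u M assume u: "u \<in> Zf S w" "dfac S w = 1" and M: "M \<in> multisets_of_size (Iso S b) q"
    then have M': "set_mset M \<subseteq> Iso S b" "size M = q"
      by (simp_all add: multisets_of_size_def)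
    show "u + sum_mset M \<in> Zf S s"
      using u M' phi_z vecs_z s by (simp add: Zf_def)
    show "\<exists>u'\<in>Iuniq S. \<exists>M'. set_mset M' \<subseteq> IsoSet S {b} \<and> u + sum_mset M = u' + sum_mset M'"
      using u M' by (auto simp: Iuniq_def Zf_def dfac_def IsoSet_def)
  qed
qed

theorem corollary5p6:
  fixes S :: "nat set" and b s w q :: nat
  assumes "numerical_semigroup S"
    and "b \<in> IBetti S"
    and "s \<in> S"
    and "w \<in> Apery S b"
    and "s = w + q * b"
  shows "card (Bset S s {b}) =
           (if dfac S w = 1 then (iso_num S b + q - 1) choose q else 0)"
proof -
  have b: "2 \<le> dfac S b"
    using assms(2) dfac_ge_2_if_Betti[OF assms(1)] by (simp add: IBetti_def)
  then have "b \<noteq> 0"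
    by (intro notI) (simp add: dfac_zero[OF assms(1)])
  have B: "Bset S s {b} =
      {u + sum_mset M | u M. u \<in> Zf S w \<and> dfac S w = 1 \<and> M \<in> multisets_of_size (Iso S b) q}"
    using Bset_singleton_eq[OF assms(1) b assms(4,5)] .
  show ?thesis
  proof (cases "dfac S w = 1")
    case True
    then obtain u where "Zf S w = {u}"
      unfolding dfac_def by (meson card_1_singletonE)
    then have "Bset S s {b} = (\<lambda>M. u + sum_mset M) ` multisets_of_size (Iso S b) q"
      using B True by auto
    then show ?thesis
      using True card_add_sum_mset_Iso[OF assms(1) \<open>b \<noteq> 0\<close>] by simp
  qed (use B in simp)
qed

end
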